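(* Let $I\subseteq\mathfrak{M}$ be an ideal of $P$, let $Z=\{z_1,\dots,z_s\}$ be a set of $s\ge 1$ distinct indeterminates in $X$, and let $\sigma$ be a $Z$-separating term ordering for $I$. (a) The reduced $\sigma$-Gröbner basis of $I$ is a $Z$-separating $\sigma$-Gröbner basis of $I$. (b) Let $\{\frac1{c_1}f_1,\dots,\frac1{c_s}f_s,g_1,\dots,g_t\}$ be a $Z$-separating $\sigma$-Gröbner basis of $I$, and for $i=1,\dots,s$ let $h_i=\mathrm{NF}_{\hat\sigma,I\cap\widehat P}(\mathrm{tail}_{z_i}(f_i))$. Then the reduced $\sigma$-Gröbner basis of $I$ is $\{z_1-h_1,\dots,z_s-h_s,g_1,\dots,g_t\}$.
   Context: $K$ is a field, $P=K[x_1,\dots,x_n]$, $X=\{x_1,\dots,x_n\}$, $\mathfrak{M}=\langle x_1,\dots,x_n\rangle$, $\widehat P=K[X\setminus Z]$, $\hat\sigma$ the restriction of $\sigma$ to $\widehat P$, and $\mathrm{NF}_{\hat\sigma,J}(h)$ the normal form of $h$ modulo an ideal $J$ of $\widehat P$ with respect to $\hat\sigma$. For $f\in P$, $\mathrm{indets}(f)$ is the set of indeterminates dividing some term in the support of $f$. For $f\in\mathfrak{M}$ with nonzero degree-one part $\mathrm{Lin}_{\mathfrak{M}}(f)$, $z\in\mathrm{indets}(\mathrm{Lin}_{\mathfrak M}(f))$, and $c\neq 0$ the coefficient of $z$ in $f$, set $\mathrm{tail}_z(f)=z-\frac1cf$; $f$ is $z$-separating if $z\notin\mathrm{indets}(\mathrm{tail}_z(f))$.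 A tuple $(f_1,\dots,f_s)$ of nonzero elements of $\mathfrak M$ is coherently $Z$-separating if each $f_i$ is $z_i$-separating and $z_i\notin\mathrm{indets}(f_j)$ for $j\ne i$. A term ordering $\sigma$ is a $Z$-separating term ordering for $I$ if there are $f_1,\dots,f_s\in I\setminus\{0\}$ with $z_i=\mathrm{LT}_\sigma(f_i)$ and $(f_1,\dots,f_s)$ coherently $Z$-separating. For such $\sigma$, a $Z$-separating $\sigma$-Gröbner basis of $I$ is a $\sigma$-Gröbner basis of the form $\{\frac1{c_1}f_1,\dots,\frac1{c_s}f_s,g_1,\dots,g_t\}$ with $(f_1,\dots,f_s)$ coherently $Z$-separating, $c_i=\mathrm{LC}_\sigma(f_i)$, $z_i=\mathrm{LT}_\sigma(f_i)$, and $\{g_1,\dots,g_t\}$ the reduced $\hat\sigma$-Gröbner basis of $I\cap\widehat P$. *)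

theory Defs
  imports "HOL-Library.Poly_Mapping"
begin

text \<open>Polynomial ring P = K[X]: indeterminates are the elements of a finite type 'x
  (so X = UNIV, n = CARD('x)); terms are finitely supported maps 'x to nat (exponent vectors);
  polynomials are finitely supported maps from terms to coefficients in the field K.\<close>

type_synonym 'x mon = "'x \<Rightarrow>\<^sub>0 nat"
type_synonym ('x, 'a) mpoly = "'x mon \<Rightarrow>\<^sub>0 'a"

definition var :: "'x \<Rightarrow> ('x, 'a::{zero,one}) mpoly" where
  "var z = Poly_Mapping.single (Poly_Mapping.single z 1) 1"

definition const :: "'a::zero \<Rightarrow> ('x, 'a) mpoly" where
  "const c = Poly_Mapping.single 0 c"

definition mdvd :: "'x mon \<Rightarrow> 'x mon \<Rightarrow> bool" where
  "mdvd s t \<longleftrightarrow> (\<exists>u. t = s + u)"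

definition indets :: "('x, 'a::zero) mpoly \<Rightarrow> 'x set" where
  "indets f = {x. \<exists>t \<in> Poly_Mapping.keys f. x \<in> Poly_Mapping.keys t}"

definition Phat :: "'x set \<Rightarrow> ('x, 'a::zero) mpoly set" where
  "Phat Z = {f. indets f \<inter> Z = {}}"

text \<open>The maximal ideal M = <x_1,...,x_n>: polynomials with zero constant term.\<close>
definition Mideal :: "('x, 'a::zero) mpoly set" where
  "Mideal = {f. Poly_Mapping.lookup f 0 = 0}"

definition is_ideal :: "('x, 'a::comm_ring_1) mpoly set \<Rightarrow> bool" where
  "is_ideal I \<longleftrightarrow> 0 \<in> I \<and> (\<forall>f\<in>I. \<forall>g\<in>I. f + g \<in> I) \<and> (\<forall>f\<in>I. \<forall>p. p * f \<in> I)"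

text \<open>Term orderings (ord s t means s \<le>_sigma t).\<close>
definition term_order :: "('x mon \<Rightarrow> 'x mon \<Rightarrow> bool) \<Rightarrow> bool" where
  "term_order ord \<longleftrightarrow>
     (\<forall>s. ord s s) \<and> (\<forall>s t u. ord s t \<longrightarrow> ord t u \<longrightarrow> ord s u) \<and>
     (\<forall>s t. ord s t \<longrightarrow> ord t s \<longrightarrow> s = t) \<and> (\<forall>s t. ord s t \<or> ord t s) \<and>
     (\<forall>t. ord 0 t) \<and> (\<forall>s t u. ord s t \<longrightarrow> ord (s + u) (t + u))"

definition LT :: "('x mon \<Rightarrow> 'x mon \<Rightarrow> bool) \<Rightarrow> ('x, 'a::zero) mpoly \<Rightarrow> 'x mon" where
  "LT ord f = (THE t. t \<in> Poly_Mapping.keys f \<and> (\<forall>s\<in>Poly_Mapping.keys f. ord s t))"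

definition LC :: "('x mon \<Rightarrow> 'x mon \<Rightarrow> bool) \<Rightarrow> ('x, 'a::zero) mpoly \<Rightarrow> 'a" where
  "LC ord f = Poly_Mapping.lookup f (LT ord f)"

text \<open>Groebner bases (of a set J of polynomials, e.g. an ideal of P or of Phat).\<close>
definition is_GB :: "('x mon \<Rightarrow> 'x mon \<Rightarrow> bool) \<Rightarrow> ('x, 'a::zero) mpoly set
    \<Rightarrow> ('x, 'a) mpoly set \<Rightarrow> bool" where
  "is_GB ord J G \<longleftrightarrow> finite G \<and> G \<subseteq> J \<and> 0 \<notin> G \<and>
     (\<forall>f\<in>J. f \<noteq> 0 \<longrightarrow> (\<exists>g\<in>G. mdvd (LT ord g) (LT ord f)))"

definition is_reduced_GB :: "('x mon \<Rightarrow> 'x mon \<Rightarrow> bool) \<Rightarrow> ('x, 'a::{zero,one}) mpoly set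
    \<Rightarrow> ('x, 'a) mpoly set \<Rightarrow> bool" where
  "is_reduced_GB ord J G \<longleftrightarrow> is_GB ord J G \<and> (\<forall>g\<in>G. LC ord g = 1) \<and>
     (\<forall>g\<in>G. \<forall>g'\<in>G. g' \<noteq> g \<longrightarrow> (\<forall>t\<in>Poly_Mapping.keys g. \<not> mdvd (LT ord g') t))"

definition NF :: "('x mon \<Rightarrow> 'x mon \<Rightarrow> bool) \<Rightarrow> ('x, 'a::ab_group_add) mpoly set
    \<Rightarrow> ('x, 'a) mpoly \<Rightarrow> ('x, 'a) mpoly" where
  "NF ord J h = (THE r. h - r \<in> J \<and>
      (\<forall>t\<in>Poly_Mapping.keys r. \<forall>f\<in>J. f \<noteq> 0 \<longrightarrow> \<not> mdvd (LT ord f) t))"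

definition tail :: "'x \<Rightarrow> ('x, 'a::field) mpoly \<Rightarrow> ('x, 'a) mpoly" where
  "tail z f = var z - const (1 / Poly_Mapping.lookup f (Poly_Mapping.single z 1)) * f"

definition z_separating :: "'x \<Rightarrow> ('x, 'a::field) mpoly \<Rightarrow> bool" where
  "z_separating z f \<longleftrightarrow> f \<in> Mideal \<and> Poly_Mapping.lookup f (Poly_Mapping.single z 1) \<noteq> 0 \<and>
      z \<notin> indets (tail z f)"

text \<open>(f_1,...,f_s) coherently Z-separating, Z = {z_1,...,z_s} (indices 0..s-1).\<close>
definition coh_Z_separating :: "nat \<Rightarrow> (nat \<Rightarrow> 'x) \<Rightarrow> (nat \<Rightarrow> ('x, 'a::field) mpoly) \<Rightarrow> bool" where
  "coh_Z_separating s z f \<longleftrightarrow>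
     (\<forall>i<s. f i \<noteq> 0 \<and> f i \<in> Mideal \<and> z_separating (z i) (f i)) \<and>
     (\<forall>i<s. \<forall>j<s. j \<noteq> i \<longrightarrow> z i \<notin> indets (f j))"

definition Z_separating_order :: "('x mon \<Rightarrow> 'x mon \<Rightarrow> bool) \<Rightarrow> ('x, 'a::field) mpoly set
    \<Rightarrow> nat \<Rightarrow> (nat \<Rightarrow> 'x) \<Rightarrow> bool" where
  "Z_separating_order ord I s z \<longleftrightarrow> term_order ord \<and>
     (\<exists>f. (\<forall>i<s. f i \<in> I \<and> f i \<noteq> 0 \<and> LT ord (f i) = Poly_Mapping.single (z i) 1) \<and>
          coh_Z_separating s z f)"

text \<open>Since sigma-hat is the
  restriction of sigma to Phat, leading terms w.r.t. sigma-hat of elements of Phat are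
  their leading terms w.r.t. sigma.\<close>
definition Z_sep_GB_data :: "('x mon \<Rightarrow> 'x mon \<Rightarrow> bool) \<Rightarrow> ('x, 'a::field) mpoly set
    \<Rightarrow> nat \<Rightarrow> (nat \<Rightarrow> 'x) \<Rightarrow> (nat \<Rightarrow> ('x, 'a) mpoly) \<Rightarrow> ('x, 'a) mpoly set \<Rightarrow> bool" where
  "Z_sep_GB_data ord I s z f Gh \<longleftrightarrow>
     is_GB ord I ((\<lambda>i. const (1 / LC ord (f i)) * f i) ` {..<s} \<union> Gh) \<and>
     coh_Z_separating s z f \<and>
     (\<forall>i<s. LT ord (f i) = Poly_Mapping.single (z i) 1) \<and>
     is_reduced_GB ord (I \<inter> Phat (z ` {..<s})) Gh"

definition is_Z_sep_GB :: "('x mon \<Rightarrow> 'x mon \<Rightarrow> bool) \<Rightarrow> ('x, 'a::field) mpoly set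
    \<Rightarrow> nat \<Rightarrow> (nat \<Rightarrow> 'x) \<Rightarrow> ('x, 'a) mpoly set \<Rightarrow> bool" where
  "is_Z_sep_GB ord I s z G \<longleftrightarrow>
     (\<exists>f Gh. Z_sep_GB_data ord I s z f Gh \<and>
        G = (\<lambda>i. const (1 / LC ord (f i)) * f i) ` {..<s} \<union> Gh)"

end

theory Submission
  imports Defs Complex_Main
begin

text \<open>
  If some f in I has leading term z, a reduced Groebner basis G of I contains an element g with
  leading term z; every other term of g is smaller than z, hence not divisible by z, so g is
  z-separating, and reducedness forbids z in all other elements of G.  Thus G splits into the
  z_i-separating elements and a part inside K[X \<setminus> Z], which is the reduced Groebner basis of
  I \<inter> K[X \<setminus> Z].  Conversely, in a Z-separating Groebner basis replace f_i / c_i = z_i - tail(f_i)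
  by z_i - h_i, where h_i is the normal form of tail(f_i) modulo I \<inter> K[X \<setminus> Z]: the leading
  terms do not change, and all other terms are standard, so the result is reduced and, by
  uniqueness of reduced Groebner bases, it is the reduced one.  Normal forms exist because term
  orderings on finitely many indeterminates are well-founded (Dickson's lemma).
\<close>

lemma mdvd_refl: "mdvd t t"
  unfolding mdvd_def by (metis add_0_right)

lemma mdvd_trans: "mdvd r s \<Longrightarrow> mdvd s t \<Longrightarrow> mdvd r t"
  unfolding mdvd_def by (metis add.assoc)

lemma keys_mon_add: "Poly_Mapping.keys ((s::'x mon) + u) = Poly_Mapping.keys s \<union> Poly_Mapping.keys u"
  by (auto simp: in_keys_iff lookup_add)

lemma mdvd_single_iff: "mdvd (Poly_Mapping.single z 1) (t::'x mon) \<longleftrightarrow> z \<in> Poly_Mapping.keys t"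
proof
  assume "mdvd (Poly_Mapping.single z 1) t"
  then show "z \<in> Poly_Mapping.keys t"
    unfolding mdvd_def by (auto simp: keys_mon_add)
next
  assume z: "z \<in> Poly_Mapping.keys t"
  have "t = Poly_Mapping.single z 1 + (t - Poly_Mapping.single z 1)"
    by (rule poly_mapping_eqI)
      (use z in \<open>auto simp: lookup_add lookup_minus lookup_single in_keys_iff when_def\<close>)
  then show "mdvd (Poly_Mapping.single z 1) t"
    unfolding mdvd_def by blast
qed

lemma single_one_eq_iff: "Poly_Mapping.single x (1::nat) = Poly_Mapping.single y 1 \<longleftrightarrow> x = y"
proof
  assume "Poly_Mapping.single x (1::nat) = Poly_Mapping.single y 1"
  then have "Poly_Mapping.keys (Poly_Mapping.single x (1::nat)) = Poly_Mapping.keys (Poly_Mapping.single y (1::nat))"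
    by simp
  then show "x = y"
    by simp
qed simp

lemma mdvd_single_cases:
  assumes "mdvd t (Poly_Mapping.single z 1 :: 'x mon)"
  shows "t = 0 \<or> t = Poly_Mapping.single z 1"
proof -
  obtain u where u: "Poly_Mapping.single z 1 = t + u"
    using assms unfolding mdvd_def by blast
  have lookup_t: "Poly_Mapping.lookup t k + Poly_Mapping.lookup u k = (if k = z then 1 else 0)" for k
    using arg_cong[OF u, of "\<lambda>p. Poly_Mapping.lookup p k"]
    by (auto simp: lookup_add lookup_single when_def split: if_splits)
  show ?thesis
  proof (cases "Poly_Mapping.lookup t z = 0")
    case True
    have "t = 0"
    proof (rule poly_mapping_eqI)
      show "Poly_Mapping.lookup t k = Poly_Mapping.lookup 0 k" for k
        using lookup_t[of k] True by (cases "k = z") auto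
    qed
    then show ?thesis ..
  next
    case False
    have "t = Poly_Mapping.single z 1"
    proof (rule poly_mapping_eqI)
      show "Poly_Mapping.lookup t k = Poly_Mapping.lookup (Poly_Mapping.single z 1) k" for k
        using lookup_t[of k] False by (cases "k = z") (auto simp: lookup_single)
    qed
    then show ?thesis ..
  qed
qed

lemma mdvdI_lookup_le:
  assumes "\<And>x. Poly_Mapping.lookup s x \<le> Poly_Mapping.lookup t x"
  shows "mdvd s (t::'x mon)"
proof -
  have "t = s + (t - s)"
    by (rule poly_mapping_eqI) (simp add: lookup_add lookup_minus assms)
  then show ?thesis
    unfolding mdvd_def by blast
qed

lemma lookup_monom_mult:
  fixes g :: "('x, 'a::comm_semiring_1) mpoly"
  shows "Poly_Mapping.lookup (Poly_Mapping.single u c * g) (u + k) = c * Poly_Mapping.lookup g k"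
proof -
  have "Poly_Mapping.lookup (Poly_Mapping.single u c * g) (u + k) =
    (\<Sum>l. (c * (\<Sum>q. Poly_Mapping.lookup g q when u + k = l + q)) when l = u)"
    unfolding lookup_mult by (rule Sum_any.cong) (simp add: lookup_single when_def)
  also have "\<dots> = c * (\<Sum>q. Poly_Mapping.lookup g q when q = k)"
    by (simp add: eq_commute[of k])
  finally show ?thesis
    by simp
qed

lemma keys_monom_mult:
  fixes g :: "('x, 'a::comm_semiring_1) mpoly"
  shows "Poly_Mapping.keys (Poly_Mapping.single u c * g) \<subseteq> (\<lambda>k. u + k) ` Poly_Mapping.keys g"
  using keys_mult[of "Poly_Mapping.single u c" g] by (auto split: if_splits)

lemma lookup_const_mult:
  fixes g :: "('x, 'a::comm_semiring_1) mpoly"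
  shows "Poly_Mapping.lookup (const c * g) k = c * Poly_Mapping.lookup g k"
  using lookup_monom_mult[of 0 c g k] unfolding const_def by simp

lemma keys_const_mult:
  fixes g :: "('x, 'a::field) mpoly"
  shows "c \<noteq> 0 \<Longrightarrow> Poly_Mapping.keys (const c * g) = Poly_Mapping.keys g"
  by (auto simp: in_keys_iff lookup_const_mult)

lemma const_one_mult: "const 1 * (g :: ('x, 'a::comm_semiring_1) mpoly) = g"
  by (rule poly_mapping_eqI) (simp add: lookup_const_mult)

lemma LT_const_mult:
  fixes f :: "('x, 'a::field) mpoly"
  shows "c \<noteq> 0 \<Longrightarrow> LT ord (const c * f) = LT ord f"
  unfolding LT_def by (simp add: keys_const_mult)

lemma lookup_var:
  "Poly_Mapping.lookup (var z :: ('x, 'a::{zero,one}) mpoly) t =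
     (if t = Poly_Mapping.single z 1 then 1 else 0)"
  unfolding var_def by (simp add: lookup_single when_def eq_commute)

lemma is_idealD:
  assumes "is_ideal I"
  shows ideal_zero: "0 \<in> I"
    and ideal_add: "f \<in> I \<Longrightarrow> g \<in> I \<Longrightarrow> f + g \<in> I"
    and ideal_mult: "f \<in> I \<Longrightarrow> p * f \<in> I"
  using assms unfolding is_ideal_def by auto

lemma ideal_diff:
  fixes I :: "('x, 'a::comm_ring_1) mpoly set"
  assumes "is_ideal I" "f \<in> I" "g \<in> I"
  shows "f - g \<in> I"
  using ideal_add[OF assms(1,2) ideal_mult[OF assms(1,3), of "-1"]] by simp

lemma Phat_iff: "f \<in> Phat Z \<longleftrightarrow> (\<forall>t\<in>Poly_Mapping.keys f. Poly_Mapping.keys t \<inter> Z = {})"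
  unfolding Phat_def indets_def by blast

lemma Phat_keys_subset: "g \<in> Phat Z \<Longrightarrow> Poly_Mapping.keys f \<subseteq> Poly_Mapping.keys g \<Longrightarrow> f \<in> Phat Z"
  unfolding Phat_iff by blast

lemma Phat_add:
  fixes f :: "('x, 'a::monoid_add) mpoly"
  shows "f \<in> Phat Z \<Longrightarrow> g \<in> Phat Z \<Longrightarrow> f + g \<in> Phat Z"
  using keys_add[of f g] unfolding Phat_iff by blast

lemma Phat_diff:
  fixes f :: "('x, 'a::ab_group_add) mpoly"
  shows "f \<in> Phat Z \<Longrightarrow> g \<in> Phat Z \<Longrightarrow> f - g \<in> Phat Z"
  using keys_diff[of f g] unfolding Phat_iff by blast

lemma Phat_monom_mult:
  fixes g :: "('x, 'a::comm_semiring_1) mpoly"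
  assumes "g \<in> Phat Z" "Poly_Mapping.keys u \<inter> Z = {}"
  shows "Poly_Mapping.single u c * g \<in> Phat Z"
  using assms keys_monom_mult[of u c g] unfolding Phat_iff by (fastforce simp: keys_mon_add)

lemma ideal_Phat_diff:
  fixes I :: "('x, 'a::comm_ring_1) mpoly set"
  shows "is_ideal I \<Longrightarrow> f \<in> I \<inter> Phat Z \<Longrightarrow> g \<in> I \<inter> Phat Z \<Longrightarrow> f - g \<in> I \<inter> Phat Z"
  using ideal_diff Phat_diff by blast

lemma ideal_Phat_add:
  fixes I :: "('x, 'a::comm_ring_1) mpoly set"
  shows "is_ideal I \<Longrightarrow> f \<in> I \<inter> Phat Z \<Longrightarrow> g \<in> I \<inter> Phat Z \<Longrightarrow> f + g \<in> I \<inter> Phat Z"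
  using ideal_add Phat_add by blast

definition standard :: "('x mon \<Rightarrow> 'x mon \<Rightarrow> bool) \<Rightarrow> ('x, 'a::zero) mpoly set \<Rightarrow> 'x mon \<Rightarrow> bool"
  where "standard ord J t \<longleftrightarrow> (\<forall>f\<in>J. f \<noteq> 0 \<longrightarrow> \<not> mdvd (LT ord f) t)"

lemma NF_eq_standard:
  "NF ord J h = (THE r. h - r \<in> J \<and> (\<forall>t\<in>Poly_Mapping.keys r. standard ord J t))"
  unfolding NF_def standard_def ..

lemma GB_divides:
  "is_GB ord J G \<Longrightarrow> f \<in> J \<Longrightarrow> f \<noteq> 0 \<Longrightarrow> \<exists>g\<in>G. mdvd (LT ord g) (LT ord f)"
  unfolding is_GB_def by blast

lemma is_reduced_GBD:
  assumes "is_reduced_GB ord J G"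
  shows "finite G" "G \<subseteq> J" "0 \<notin> G"
    and reduced_GB_divides: "\<And>f. f \<in> J \<Longrightarrow> f \<noteq> 0 \<Longrightarrow> \<exists>g\<in>G. mdvd (LT ord g) (LT ord f)"
    and reduced_GB_monic: "\<And>g. g \<in> G \<Longrightarrow> LC ord g = 1"
    and reduced_GB_reduced: "\<And>g g' t. g \<in> G \<Longrightarrow> g' \<in> G \<Longrightarrow> g' \<noteq> g \<Longrightarrow>
      t \<in> Poly_Mapping.keys g \<Longrightarrow> \<not> mdvd (LT ord g') t"
  using assms unfolding is_reduced_GB_def is_GB_def by blast+

lemma reduced_GB_var_exclusive:
  assumes "is_reduced_GB ord J G" "g \<in> G" "g' \<in> G" "LT ord g' = Poly_Mapping.single z 1"
    and "t \<in> Poly_Mapping.keys g" "z \<in> Poly_Mapping.keys t"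
  shows "g = g'"
  using reduced_GB_reduced[OF assms(1,2,3) _ assms(5)] assms(4,6) mdvd_single_iff by metis

locale term_ordering =
  fixes ord :: "'x mon \<Rightarrow> 'x mon \<Rightarrow> bool"
  assumes term_order_ord: "term_order ord"
begin

lemma term_order_refl: "ord s s"
  using term_order_ord unfolding term_order_def by blast

lemma term_order_trans: "ord r s \<Longrightarrow> ord s t \<Longrightarrow> ord r t"
  using term_order_ord unfolding term_order_def by blast

lemma term_order_antisym: "ord s t \<Longrightarrow> ord t s \<Longrightarrow> s = t"
  using term_order_ord unfolding term_order_def by blast

lemma term_order_linear: "ord s t \<or> ord t s"
  using term_order_ord unfolding term_order_def by blast

lemma term_order_add_right: "ord s t \<Longrightarrow> ord (s + u) (t + u)"
  using term_order_ord unfolding term_order_def by blast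

lemma term_order_mdvd: "mdvd s t \<Longrightarrow> ord s t"
proof -
  assume "mdvd s t"
  then obtain u where "t = s + u"
    unfolding mdvd_def by blast
  moreover have "ord (0 + s) (u + s)"
    using term_order_ord term_order_add_right unfolding term_order_def by blast
  ultimately show "ord s t"
    by (simp add: add.commute)
qed

lemma term_order_finite_max:
  assumes "finite A" "A \<noteq> {}"
  shows "\<exists>t\<in>A. \<forall>s\<in>A. ord s t"
  using assms
proof (induction A rule: finite_ne_induct)
  case (singleton x)
  then show ?case
    using term_order_refl by blast
next
  case (insert x A)
  then obtain t where t: "t \<in> A" "\<forall>s\<in>A. ord s t"
    by blast
  show ?case
  proof (cases "ord x t")
    case True
    then show ?thesis
      using t by blast
  next
    case False
    then have "ord t x"
      using term_order_linear by blast
    then show ?thesis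
      using t term_order_refl term_order_trans by blast
  qed
qed

lemma LT_greatest:
  fixes f :: "('x, 'a::zero) mpoly"
  assumes "f \<noteq> 0"
  shows "LT ord f \<in> Poly_Mapping.keys f \<and> (\<forall>s\<in>Poly_Mapping.keys f. ord s (LT ord f))"
proof -
  obtain t where t: "t \<in> Poly_Mapping.keys f" "\<forall>s\<in>Poly_Mapping.keys f. ord s t"
    using term_order_finite_max[of "Poly_Mapping.keys f"] assms by auto
  have "LT ord f = t"
    unfolding LT_def by (rule the_equality) (use t term_order_antisym in blast)+
  then show ?thesis
    using t by simp
qed

lemma LT_in_keys: "(f::('x, 'a::zero) mpoly) \<noteq> 0 \<Longrightarrow> LT ord f \<in> Poly_Mapping.keys f"
  using LT_greatest by blast

lemma key_le_LT: "t \<in> Poly_Mapping.keys (f::('x, 'a::zero) mpoly) \<Longrightarrow> ord t (LT ord f)"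
  using LT_greatest[of f] by fastforce

lemma LT_eqI:
  fixes f :: "('x, 'a::zero) mpoly"
  assumes "t \<in> Poly_Mapping.keys f" "\<forall>s\<in>Poly_Mapping.keys f. ord s t"
  shows "LT ord f = t"
  using assms key_le_LT[of t f] LT_in_keys[of f] term_order_antisym by force

lemma LC_neq_zero: "(f::('x, 'a::zero) mpoly) \<noteq> 0 \<Longrightarrow> LC ord f \<noteq> 0"
  unfolding LC_def using LT_in_keys by (simp add: in_keys_iff)

lemma LT_neq_zero_if_Mideal:
  fixes f :: "('x, 'a::zero) mpoly"
  assumes "f \<in> Mideal" "f \<noteq> 0"
  shows "LT ord f \<noteq> 0"
proof
  assume "LT ord f = 0"
  then show False
    using LT_in_keys[OF assms(2)] assms(1) by (simp add: Mideal_def in_keys_iff)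
qed

lemma keys_monom_mult_le:
  fixes g :: "('x, 'a::comm_semiring_1) mpoly"
  assumes "k \<in> Poly_Mapping.keys (Poly_Mapping.single u c * g)"
  shows "ord k (u + LT ord g)"
proof -
  obtain b where "b \<in> Poly_Mapping.keys g" "k = u + b"
    using assms keys_monom_mult by blast
  then show ?thesis
    using key_le_LT term_order_add_right by (metis add.commute)
qed

lemma standard_remainder_unique:
  fixes J :: "('x, 'a::ab_group_add) mpoly set"
  assumes diff: "\<And>a b. a \<in> J \<Longrightarrow> b \<in> J \<Longrightarrow> a - b \<in> J"
    and r: "h - r \<in> J" "\<forall>t\<in>Poly_Mapping.keys r. standard ord J t"
    and r': "h - r' \<in> J" "\<forall>t\<in>Poly_Mapping.keys r'. standard ord J t"
  shows "r = r'"
proof (rule ccontr)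
  assume "r \<noteq> r'"
  then have d: "r' - r \<noteq> 0"
    by simp
  have "(h - r) - (h - r') = r' - r"
    by (simp add: algebra_simps)
  then have "r' - r \<in> J"
    using diff[OF r(1) r'(1)] by simp
  moreover have "LT ord (r' - r) \<in> Poly_Mapping.keys r \<union> Poly_Mapping.keys r'"
    using LT_in_keys[OF d] keys_diff[of r' r] by blast
  ultimately show False
    using r(2) r'(2) d mdvd_refl unfolding standard_def by blast
qed

lemma standard_remainder_below:
  fixes J :: "('x, 'a::ab_group_add) mpoly set"
  assumes hr: "h - r \<in> J" "\<forall>t\<in>Poly_Mapping.keys r. standard ord J t"
    and below: "\<forall>k\<in>Poly_Mapping.keys h. ord k t \<and> k \<noteq> t"
  shows "\<forall>k\<in>Poly_Mapping.keys r. ord k t \<and> k \<noteq> t"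
proof (cases "r = 0")
  case False
  define L where "L = LT ord r"
  have L: "L \<in> Poly_Mapping.keys r" "\<forall>k\<in>Poly_Mapping.keys r. ord k L"
    using LT_greatest[OF False] unfolding L_def by blast+
  have "ord L t \<and> L \<noteq> t"
  proof (rule ccontr)
    assume "\<not> (ord L t \<and> L \<noteq> t)"
    then have tL: "ord t L"
      using term_order_linear term_order_refl by blast
    have "L \<notin> Poly_Mapping.keys h"
      using below tL term_order_antisym by blast
    then have "L \<in> Poly_Mapping.keys (h - r)"
      using L(1) by (simp add: in_keys_iff lookup_minus)
    moreover have "\<forall>k\<in>Poly_Mapping.keys (h - r). ord k L"
      using keys_diff[of h r] below L(2) tL term_order_trans by blast
    ultimately have "LT ord (h - r) = L"
      by (rule LT_eqI)
    then show False
      using hr L(1) \<open>L \<in> Poly_Mapping.keys (h - r)\<close> mdvd_refl unfolding standard_def by fastforce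
  qed
  then show ?thesis
    using L(2) term_order_trans term_order_antisym by blast
qed simp

section \<open>Uniqueness of reduced Groebner bases\<close>

lemma reduced_GB_LT_match:
  assumes G: "is_reduced_GB ord J G" and G': "is_reduced_GB ord J G'" and g: "g \<in> G"
  shows "\<exists>g'\<in>G'. LT ord g' = LT ord g"
proof -
  have gJ: "g \<in> J" "g \<noteq> 0"
    using is_reduced_GBD(2,3)[OF G] g by blast+
  obtain g' where g': "g' \<in> G'" "mdvd (LT ord g') (LT ord g)"
    using reduced_GB_divides[OF G' gJ] by blast
  have g'J: "g' \<in> J" "g' \<noteq> 0"
    using is_reduced_GBD(2,3)[OF G'] g'(1) by blast+
  obtain g'' where g'': "g'' \<in> G" "mdvd (LT ord g'') (LT ord g')"
    using reduced_GB_divides[OF G g'J] by blast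
  have "g'' = g"
    using reduced_GB_reduced[OF G g g''(1) _ LT_in_keys[OF gJ(2)]] mdvd_trans[OF g''(2) g'(2)] by blast
  then have "LT ord g' = LT ord g"
    using g'' g' term_order_mdvd term_order_antisym by blast
  then show ?thesis
    using g'(1) by blast
qed

lemma reduced_GB_subset_reduced_GB:
  fixes J :: "('x, 'a::field) mpoly set"
  assumes diff: "\<And>a b. a \<in> J \<Longrightarrow> b \<in> J \<Longrightarrow> a - b \<in> J"
    and G: "is_reduced_GB ord J G" and G': "is_reduced_GB ord J G'"
  shows "G \<subseteq> G'"
proof
  fix g assume g: "g \<in> G"
  obtain g' where g': "g' \<in> G'" "LT ord g' = LT ord g"
    using reduced_GB_LT_match[OF G G' g] by blast
  have gJ: "g \<in> J" "g \<noteq> 0" and g'J: "g' \<in> J" "g' \<noteq> 0"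
    using is_reduced_GBD(2,3)[OF G] is_reduced_GBD(2,3)[OF G'] g g'(1) by blast+
  show "g \<in> G'"
  proof (rule ccontr)
    assume "g \<notin> G'"
    define d where "d = g - g'"
    have d: "d \<in> J" "d \<noteq> 0"
      using diff[OF gJ(1) g'J(1)] g g'(1) \<open>g \<notin> G'\<close> unfolding d_def by auto
    \<comment> \<open>The leading coefficients cancel, so d only has terms below LT g.\<close>
    have "Poly_Mapping.lookup d (LT ord g) = 0"
      using reduced_GB_monic[OF G g] reduced_GB_monic[OF G' g'(1)] g'(2)
      unfolding d_def LC_def by (simp add: lookup_minus)
    moreover have LTd: "LT ord d \<in> Poly_Mapping.keys g \<union> Poly_Mapping.keys g'"
      using LT_in_keys[OF d(2)] keys_diff[of g g'] unfolding d_def by blast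
    ultimately have less: "ord (LT ord d) (LT ord g) \<and> LT ord d \<noteq> LT ord g"
      using LT_in_keys[OF d(2)] key_le_LT[of "LT ord d" g] key_le_LT[of "LT ord d" g'] g'(2)
      by (auto simp: in_keys_iff)
    obtain h where h: "h \<in> G" "mdvd (LT ord h) (LT ord d)"
      using reduced_GB_divides[OF G d] by blast
    have "LT ord h \<noteq> LT ord g"
      using less term_order_mdvd[OF h(2)] term_order_antisym by metis
    show False
    proof (cases "LT ord d \<in> Poly_Mapping.keys g")
      case True
      then show False
        using reduced_GB_reduced[OF G g h(1)] h(2) \<open>LT ord h \<noteq> LT ord g\<close> by blast
    next
      case False
      obtain h' where h': "h' \<in> G'" "LT ord h' = LT ord h"
        using reduced_GB_LT_match[OF G G' h(1)] by blast
      moreover have "h' \<noteq> g'"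
        using h'(2) g'(2) \<open>LT ord h \<noteq> LT ord g\<close> by metis
      ultimately show False
        using reduced_GB_reduced[OF G' g'(1) h'(1)] LTd False h(2) by auto
    qed
  qed
qed

lemma reduced_GB_unique:
  fixes J :: "('x, 'a::field) mpoly set"
  assumes "\<And>a b. a \<in> J \<Longrightarrow> b \<in> J \<Longrightarrow> a - b \<in> J"
    and "is_reduced_GB ord J G" "is_reduced_GB ord J G'"
  shows "G = G'"
  using reduced_GB_subset_reduced_GB[OF assms(1)] assms(2,3) by blast

end

lemma tail_in_Phat:
  assumes coh: "coh_Z_separating s z f" and inj: "inj_on z {..<s}" and i: "i < s"
  shows "tail (z i) (f i) \<in> Phat (z ` {..<s})"
  unfolding Phat_iff
proof (intro ballI equals0I)
  fix t x assume t: "t \<in> Poly_Mapping.keys (tail (z i) (f i))"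
    and "x \<in> Poly_Mapping.keys t \<inter> z ` {..<s}"
  then obtain j where j: "j < s" "z j \<in> Poly_Mapping.keys t"
    by blast
  have sep: "z_separating (z i) (f i)" and cross: "j \<noteq> i \<Longrightarrow> z j \<notin> indets (f i)"
    using coh i j(1) unfolding coh_Z_separating_def by blast+
  show False
  proof (cases "j = i")
    case True
    then show False
      using sep t j(2) unfolding z_separating_def indets_def by blast
  next
    case False
    have "t = Poly_Mapping.single (z i) 1 \<or> t \<in> Poly_Mapping.keys (f i)"
      using t by (auto simp: tail_def in_keys_iff lookup_minus lookup_var lookup_const_mult split: if_splits)
    then show False
      using cross[OF False] j False inj i unfolding indets_def inj_on_def by auto
  qed
qed

lemma terms_avoid_other_vars:
  assumes inj: "inj_on z {..<s}" and Gh: "Gh \<subseteq> Phat (z ` {..<s})"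
    and S_tail: "\<forall>i<s. \<forall>t\<in>Poly_Mapping.keys (S i).
      t = Poly_Mapping.single (z i) 1 \<or> Poly_Mapping.keys t \<inter> z ` {..<s} = {}"
    and g: "g \<in> S ` {..<s} \<union> Gh" "g \<noteq> S j" and j: "j < s" and t: "t \<in> Poly_Mapping.keys g"
  shows "z j \<notin> Poly_Mapping.keys t"
proof (cases "g \<in> Gh")
  case True
  then have "g \<in> Phat (z ` {..<s})"
    using Gh by blast
  then show ?thesis
    using t j unfolding Phat_iff by blast
next
  case False
  then obtain i where i: "i < s" "g = S i"
    using g(1) by blast
  then have "z j \<noteq> z i"
    using j g(2) inj unfolding inj_on_def by blast
  moreover have "t = Poly_Mapping.single (z i) 1 \<or> Poly_Mapping.keys t \<inter> z ` {..<s} = {}"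
    using S_tail i t by blast
  ultimately show ?thesis
    using j by auto
qed

context term_ordering
begin

lemma z_separating_if_LT_var:
  fixes f :: "('x, 'a::field) mpoly"
  assumes f: "f \<in> Mideal" "f \<noteq> 0" and LT: "LT ord f = Poly_Mapping.single z 1"
  shows "z_separating z f"
proof -
  let ?zt = "Poly_Mapping.single z (1::nat)"
  have c: "Poly_Mapping.lookup f ?zt \<noteq> 0"
    using LC_neq_zero[OF f(2)] LT unfolding LC_def by simp
  have "z \<notin> indets (tail z f)"
  proof
    assume "z \<in> indets (tail z f)"
    then obtain t where t: "t \<in> Poly_Mapping.keys (tail z f)" "z \<in> Poly_Mapping.keys t"
      unfolding indets_def by blast
    have lookup_tail: "Poly_Mapping.lookup (tail z f) t =
        (if t = ?zt then 1 else 0) - Poly_Mapping.lookup f t / Poly_Mapping.lookup f ?zt"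
      unfolding tail_def by (simp add: lookup_minus lookup_var lookup_const_mult)
    show False
    proof (cases "t = ?zt")
      case True
      then show False
        using t(1) c lookup_tail by (simp add: in_keys_iff)
    next
      case False
      then have "ord t ?zt"
        using t(1) lookup_tail key_le_LT[of t f] LT by (auto simp: in_keys_iff)
      moreover have "ord ?zt t"
        using term_order_mdvd mdvd_single_iff[of z t] t(2) by blast
      ultimately show False
        using False term_order_antisym by blast
    qed
  qed
  then show ?thesis
    unfolding z_separating_def using f(1) c by blast
qed

lemma keys_tail_below:
  fixes f :: "('x, 'a::field) mpoly"
  assumes "z_separating z f" "LT ord f = Poly_Mapping.single z 1"
  shows "\<forall>t\<in>Poly_Mapping.keys (tail z f). ord t (Poly_Mapping.single z 1) \<and> t \<noteq> Poly_Mapping.single z 1"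
proof
  fix t assume t: "t \<in> Poly_Mapping.keys (tail z f)"
  then have "t \<noteq> Poly_Mapping.single z 1"
    using assms(1) unfolding z_separating_def indets_def by fastforce
  moreover from this have "t \<in> Poly_Mapping.keys f"
    using t by (auto simp: tail_def in_keys_iff lookup_minus lookup_var lookup_const_mult)
  ultimately show "ord t (Poly_Mapping.single z 1) \<and> t \<noteq> Poly_Mapping.single z 1"
    using key_le_LT assms(2) by metis
qed

lemma reduced_GB_has_var_LT:
  assumes IM: "I \<subseteq> Mideal" and G: "is_reduced_GB ord I G"
    and f: "f \<in> I" "f \<noteq> 0" "LT ord f = Poly_Mapping.single z 1"
  shows "\<exists>g\<in>G. LT ord g = Poly_Mapping.single z 1"
proof -
  obtain g where g: "g \<in> G" "mdvd (LT ord g) (Poly_Mapping.single z 1)"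
    using reduced_GB_divides[OF G f(1,2)] f(3) by metis
  have "LT ord g \<noteq> 0"
    using LT_neq_zero_if_Mideal is_reduced_GBD(2,3)[OF G] g(1) IM by blast
  then show ?thesis
    using mdvd_single_cases[OF g(2)] g(1) by blast
qed

lemma reduced_GB_Z_free_part:
  assumes G: "is_reduced_GB ord I G"
    and gi: "\<forall>i<s. gi i \<in> G \<and> LT ord (gi i) = Poly_Mapping.single (z i) 1"
  shows "is_reduced_GB ord (I \<inter> Phat (z ` {..<s})) (G - gi ` {..<s})"
  unfolding is_reduced_GB_def is_GB_def
proof (intro conjI ballI impI allI)
  show "G - gi ` {..<s} \<subseteq> I \<inter> Phat (z ` {..<s})"
  proof
    fix g assume g: "g \<in> G - gi ` {..<s}"
    have "g \<in> Phat (z ` {..<s})"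
      unfolding Phat_iff using reduced_GB_var_exclusive[OF G] g gi by blast
    then show "g \<in> I \<inter> Phat (z ` {..<s})"
      using g is_reduced_GBD(2)[OF G] by blast
  qed
next
  fix f assume f: "f \<in> I \<inter> Phat (z ` {..<s})" "f \<noteq> 0"
  obtain g where g: "g \<in> G" "mdvd (LT ord g) (LT ord f)"
    using reduced_GB_divides[OF G] f by blast
  have "Poly_Mapping.keys (LT ord f) \<inter> z ` {..<s} = {}"
    using f LT_in_keys[OF f(2)] by (auto simp: Phat_iff)
  then have "g \<notin> gi ` {..<s}"
    using g(2) gi mdvd_single_iff by fastforce
  then show "\<exists>g\<in>G - gi ` {..<s}. mdvd (LT ord g) (LT ord f)"
    using g by blast
qed (use is_reduced_GBD[OF G] in auto)

lemma reduced_GB_is_Z_sep_GB: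
  fixes I :: "('x, 'a::field) mpoly set"
  assumes IM: "I \<subseteq> Mideal" and inj: "inj_on z {..<s}"
    and F: "\<forall>i<s. F i \<in> I \<and> F i \<noteq> 0 \<and> LT ord (F i) = Poly_Mapping.single (z i) 1"
    and G: "is_reduced_GB ord I G"
  shows "is_Z_sep_GB ord I s z G"
proof -
  have "\<forall>i\<in>{..<s}. \<exists>g. g \<in> G \<and> LT ord g = Poly_Mapping.single (z i) 1"
    using reduced_GB_has_var_LT[OF IM G] F by blast
  then obtain gi where gi: "\<forall>i<s. gi i \<in> G \<and> LT ord (gi i) = Poly_Mapping.single (z i) 1"
    by (auto dest!: bchoice)
  have gi_M: "gi i \<in> Mideal" "gi i \<noteq> 0" if "i < s" for i
    using gi that IM is_reduced_GBD(2,3)[OF G] by auto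
  have normalized: "const (1 / LC ord (gi i)) * gi i = gi i" if "i < s" for i
    using reduced_GB_monic[OF G] gi that by (simp add: const_one_mult)
  have coh: "coh_Z_separating s z gi"
    unfolding coh_Z_separating_def
  proof (intro conjI allI impI)
    fix i assume "i < s"
    then show "gi i \<noteq> 0" "gi i \<in> Mideal" "z_separating (z i) (gi i)"
      using gi_M gi z_separating_if_LT_var by blast+
  next
    fix i j assume i: "i < s" and j: "j < s" and "j \<noteq> i"
    then have "z j \<noteq> z i"
      using inj unfolding inj_on_def by blast
    then have "gi j \<noteq> gi i"
      using gi[rule_format, OF i] gi[rule_format, OF j] single_one_eq_iff by metis
    then show "z i \<notin> indets (gi j)"
      using reduced_GB_var_exclusive[OF G] gi i j unfolding indets_def by blast
  qed
  have G_split: "(\<lambda>i. const (1 / LC ord (gi i)) * gi i) ` {..<s} \<union> (G - gi ` {..<s}) = G"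
    using normalized gi by auto
  have "Z_sep_GB_data ord I s z gi (G - gi ` {..<s})"
    unfolding Z_sep_GB_data_def G_split
    using G coh gi reduced_GB_Z_free_part[OF G gi] by (simp add: is_reduced_GB_def)
  then show ?thesis
    unfolding is_Z_sep_GB_def using G_split by blast
qed

lemma LT_not_dvd_var_if_Phat:
  fixes g :: "('x, 'a::zero) mpoly"
  assumes "g \<in> Mideal" "g \<in> Phat Z" "g \<noteq> 0" "x \<in> Z"
  shows "\<not> mdvd (LT ord g) (Poly_Mapping.single x 1)"
proof
  assume "mdvd (LT ord g) (Poly_Mapping.single x 1)"
  then have "LT ord g = Poly_Mapping.single x 1"
    using mdvd_single_cases LT_neq_zero_if_Mideal[OF assms(1,3)] by metis
  moreover have "Poly_Mapping.keys (LT ord g) \<inter> Z = {}"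
    using assms(2) LT_in_keys[OF assms(3)] unfolding Phat_iff by blast
  ultimately show False
    using assms(4) by simp
qed

lemma separated_parts_not_reducible:
  fixes I :: "('x, 'a::field) mpoly set" and s :: nat and z :: "nat \<Rightarrow> 'x"
  defines "Z \<equiv> z ` {..<s}"
  assumes IM: "I \<subseteq> Mideal" and inj: "inj_on z {..<s}"
    and Gh: "is_reduced_GB ord (I \<inter> Phat Z) Gh"
    and S: "\<forall>i<s. LT ord (S i) = Poly_Mapping.single (z i) 1"
    and S_tail: "\<forall>i<s. \<forall>t\<in>Poly_Mapping.keys (S i). t = Poly_Mapping.single (z i) 1 \<or>
       (Poly_Mapping.keys t \<inter> Z = {} \<and> standard ord (I \<inter> Phat Z) t)"
    and g: "g \<in> S ` {..<s} \<union> Gh" and g': "g' \<in> S ` {..<s} \<union> Gh"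
    and "g' \<noteq> g" and t: "t \<in> Poly_Mapping.keys g"
  shows "\<not> mdvd (LT ord g') t"
proof -
  have Gh_sub: "Gh \<subseteq> I \<inter> Phat Z" "0 \<notin> Gh"
    using is_reduced_GBD(2,3)[OF Gh] by blast+
  show ?thesis
  proof (cases "g' \<in> Gh")
    case False
    then obtain j where j: "j < s" "g' = S j"
      using g' by blast
    have "z j \<notin> Poly_Mapping.keys t"
      by (rule terms_avoid_other_vars[OF inj _ _ g _ j(1) t])
        (use Gh_sub S_tail j \<open>g' \<noteq> g\<close> in \<open>auto simp: Z_def\<close>)
    then show ?thesis
      using S[rule_format, OF j(1)] j(2) mdvd_single_iff[of "z j" t] by simp
  next
    case True
    then have g'_J: "g' \<in> I \<inter> Phat Z" "g' \<noteq> 0"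
      using Gh_sub by blast+
    show ?thesis
    proof (cases "g \<in> Gh")
      case True
      show ?thesis
        by (rule reduced_GB_reduced[OF Gh True \<open>g' \<in> Gh\<close> \<open>g' \<noteq> g\<close> t])
    next
      case False
      then obtain i where i: "i < s" "g = S i"
        using g by blast
      then have "t = Poly_Mapping.single (z i) 1 \<or> standard ord (I \<inter> Phat Z) t"
        using S_tail t by blast
      moreover have "\<not> mdvd (LT ord g') (Poly_Mapping.single (z i) 1)"
        using LT_not_dvd_var_if_Phat[of g' Z "z i"] g'_J IM i(1) unfolding Z_def by blast
      ultimately show ?thesis
        using g'_J unfolding standard_def by blast
    qed
  qed
qed

lemma reduced_GB_of_separated_parts:
  fixes I :: "('x, 'a::field) mpoly set" and s :: nat and z :: "nat \<Rightarrow> 'x"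
  defines "Z \<equiv> z ` {..<s}"
  assumes IM: "I \<subseteq> Mideal" and inj: "inj_on z {..<s}"
    and GB: "is_GB ord I (F ` {..<s} \<union> Gh)"
    and LT_F: "\<forall>i<s. LT ord (F i) = Poly_Mapping.single (z i) 1"
    and Gh: "is_reduced_GB ord (I \<inter> Phat Z) Gh"
    and S: "\<forall>i<s. S i \<in> I \<and> LT ord (S i) = Poly_Mapping.single (z i) 1 \<and> LC ord (S i) = 1"
    and S_tail: "\<forall>i<s. \<forall>t\<in>Poly_Mapping.keys (S i). t = Poly_Mapping.single (z i) 1 \<or>
       (Poly_Mapping.keys t \<inter> Z = {} \<and> standard ord (I \<inter> Phat Z) t)"
  shows "is_reduced_GB ord I (S ` {..<s} \<union> Gh)"
  unfolding is_reduced_GB_def is_GB_def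
proof (intro conjI ballI impI allI)
  have Gh_sub: "Gh \<subseteq> I \<inter> Phat Z" "0 \<notin> Gh"
    using is_reduced_GBD(2,3)[OF Gh] by blast+
  show "finite (S ` {..<s} \<union> Gh)" "S ` {..<s} \<union> Gh \<subseteq> I"
    using is_reduced_GBD(1)[OF Gh] Gh_sub S by auto
  show "0 \<notin> S ` {..<s} \<union> Gh"
    using S Gh_sub(2) by (force simp: LC_def)
  show "LC ord g = 1" if "g \<in> S ` {..<s} \<union> Gh" for g
    using that
  proof
    assume "g \<in> S ` {..<s}"
    then obtain i where "i < s" "g = S i"
      by blast
    then show ?thesis
      using S by simp
  qed (rule reduced_GB_monic[OF Gh])
  show "\<exists>g\<in>S ` {..<s} \<union> Gh. mdvd (LT ord g) (LT ord f)" if f: "f \<in> I" "f \<noteq> 0" for f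
  proof -
    obtain g where g: "g \<in> F ` {..<s} \<union> Gh" "mdvd (LT ord g) (LT ord f)"
      using GB_divides[OF GB f] by blast
    show ?thesis
    proof (cases "g \<in> Gh")
      case False
      then obtain i where i: "i < s" "g = F i"
        using g(1) by blast
      have "LT ord (S i) = LT ord g"
        using LT_F[rule_format, OF i(1)] S[rule_format, OF i(1)] i(2) by argo
      then show ?thesis
        using g(2) i(1) by (metis UnI1 imageI lessThan_iff)
    qed (use g in blast)
  qed
  show "\<not> mdvd (LT ord g') t"
    if "g \<in> S ` {..<s} \<union> Gh" "g' \<in> S ` {..<s} \<union> Gh" "g' \<noteq> g" "t \<in> Poly_Mapping.keys g"
    for g g' t
  proof -
    have "\<forall>i<s. LT ord (S i) = Poly_Mapping.single (z i) 1"
      using S by simp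
    then show ?thesis
      by (rule separated_parts_not_reducible[OF IM inj Gh[unfolded Z_def] _ S_tail[unfolded Z_def] that])
  qed
qed

end

section \<open>Well-foundedness of term orderings\<close>

lemma incseq_subseq_nat:
  fixes a :: "nat \<Rightarrow> nat"
  shows "\<exists>g. strict_mono g \<and> incseq (\<lambda>n. a (g n))"
proof -
  obtain f where f: "strict_mono f" "incseq (\<lambda>n. a (f n)) \<or> decseq (\<lambda>n. a (f n))"
    using seq_monosub[of a] monoseq_iff by blast
  show ?thesis
  proof (cases "incseq (\<lambda>n. a (f n))")
    case True
    then show ?thesis
      using f(1) by blast
  next
    case False
    \<comment> \<open>A non-increasing sequence of naturals is constant from its minimum on.\<close>
    obtain n0 where n0: "\<forall>n. a (f n0) \<le> a (f n)"
      using ex_has_least_nat[of "\<lambda>_. True" 0 "\<lambda>n. a (f n)"] by blast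
    have "a (f (n0 + n)) = a (f n0)" for n
      using f(2) False n0 by (metis decseqD le_add1 le_antisym)
    moreover have "strict_mono (\<lambda>n. f (n0 + n))"
      using f(1) by (simp add: strict_mono_def)
    ultimately show ?thesis
      by (intro exI[of _ "\<lambda>n. f (n0 + n)"]) (simp add: incseq_def)
  qed
qed

lemma pointwise_incseq_subseq:
  fixes F :: "nat \<Rightarrow> 'x mon"
  assumes "finite V"
  shows "\<exists>g. strict_mono g \<and> (\<forall>x\<in>V. incseq (\<lambda>n. Poly_Mapping.lookup (F (g n)) x))"
  using assms
proof (induction V arbitrary: F rule: finite_induct)
  case empty
  show ?case
    by (intro exI[of _ "\<lambda>n. n"]) (simp add: strict_mono_def)
next
  case (insert y V)
  obtain \<phi> where \<phi>: "strict_mono \<phi>" "\<forall>x\<in>V. incseq (\<lambda>n. Poly_Mapping.lookup (F (\<phi> n)) x)"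
    using insert.IH by blast
  obtain \<psi> where \<psi>: "strict_mono \<psi>" "incseq (\<lambda>n. Poly_Mapping.lookup (F (\<phi> (\<psi> n))) y)"
    using incseq_subseq_nat[of "\<lambda>n. Poly_Mapping.lookup (F (\<phi> n)) y"] by blast
  have "incseq (\<lambda>n. Poly_Mapping.lookup (F (\<phi> (\<psi> n))) x)" if "x \<in> V" for x
    using \<phi>(2) that strict_mono_mono[OF \<psi>(1)] unfolding incseq_def mono_def by simp
  moreover have "strict_mono (\<lambda>n. \<phi> (\<psi> n))"
    using \<phi>(1) \<psi>(1) by (simp add: strict_mono_def)
  ultimately show ?case
    using \<psi>(2) by (intro exI[of _ "\<lambda>n. \<phi> (\<psi> n)"]) auto
qed

lemma dickson:
  fixes F :: "nat \<Rightarrow> ('x::finite) mon"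
  shows "\<exists>i j. i < j \<and> mdvd (F i) (F j)"
proof -
  obtain g where g: "strict_mono g" "\<forall>x. incseq (\<lambda>n. Poly_Mapping.lookup (F (g n)) x)"
    using pointwise_incseq_subseq[of UNIV F] by auto
  have "mdvd (F (g 0)) (F (g 1))"
    using g(2) by (intro mdvdI_lookup_le) (simp add: incseq_def)
  then show ?thesis
    using g(1) unfolding strict_mono_def by blast
qed

locale finite_term_ordering = term_ordering ord for ord :: "('x::finite) mon \<Rightarrow> 'x mon \<Rightarrow> bool"
begin

lemma wf_strict_term_order: "wf {(s, t). ord s t \<and> s \<noteq> t}"
proof (rule ccontr)
  assume "\<not> ?thesis"
  then obtain F where F: "\<And>i. ord (F (Suc i)) (F i) \<and> F (Suc i) \<noteq> F i"
    unfolding wf_iff_no_infinite_down_chain by auto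
  have chain: "ord (F j) (F i)" if "i \<le> j" for i j
    using that
  proof (induction j rule: dec_induct)
    case (step j)
    then show ?case
      using F term_order_trans by blast
  qed (rule term_order_refl)
  obtain i j where "i < j" "mdvd (F i) (F j)"
    using dickson by blast
  then have "F j = F i"
    using chain[of i j] term_order_mdvd term_order_antisym by simp
  then have "F (Suc i) = F i"
    using chain[of "Suc i" j] chain[of i "Suc i"] \<open>i < j\<close> term_order_antisym by simp
  then show False
    using F by blast
qed

section \<open>Normal forms\<close>

lemma eliminate_top_term:
  fixes I :: "('x, 'a::field) mpoly set"
  assumes I: "is_ideal I" and p: "p \<in> Phat Z" and below: "\<forall>k\<in>Poly_Mapping.keys p. ord k t"
  shows "\<exists>q. q \<in> Phat Z \<and> (\<forall>k\<in>Poly_Mapping.keys q. ord k t \<and> k \<noteq> t) \<and>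
    (p - q \<in> I \<inter> Phat Z \<or> (\<forall>k\<in>Poly_Mapping.keys (p - q). standard ord (I \<inter> Phat Z) k))"
proof -
  define c where "c = Poly_Mapping.lookup p t"
  show ?thesis
  proof (cases "c = 0 \<or> standard ord (I \<inter> Phat Z) t")
    case True
    define q where "q = p - Poly_Mapping.single t c"
    have "Poly_Mapping.keys q \<subseteq> Poly_Mapping.keys p - {t}"
      by (auto simp: q_def c_def in_keys_iff lookup_minus lookup_single when_def split: if_splits)
    moreover have "\<forall>k\<in>Poly_Mapping.keys (p - q). standard ord (I \<inter> Phat Z) k"
      using True by (auto simp: q_def)
    ultimately show ?thesis
      using p below Phat_keys_subset[of p Z q] by blast
  next
    case False
    then obtain g where g: "g \<in> I \<inter> Phat Z" "g \<noteq> 0" "mdvd (LT ord g) t" and "c \<noteq> 0"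
      unfolding standard_def by blast
    then obtain u where u: "t = u + LT ord g"
      unfolding mdvd_def by (metis add.commute)
    define m where "m = Poly_Mapping.single u (c / LC ord g) * g"
    have "t \<in> Poly_Mapping.keys p"
      using \<open>c \<noteq> 0\<close> unfolding c_def by (simp add: in_keys_iff)
    then have "Poly_Mapping.keys t \<inter> Z = {}"
      using p unfolding Phat_iff by blast
    then have "Poly_Mapping.keys u \<inter> Z = {}"
      using keys_mon_add[of u "LT ord g"] u by auto
    then have m: "m \<in> I \<inter> Phat Z"
      using g(1) ideal_mult[OF I] Phat_monom_mult unfolding m_def by blast
    have "Poly_Mapping.lookup m t = c"
      using lookup_monom_mult[of u "c / LC ord g" g "LT ord g"] LC_neq_zero[OF g(2)] u
      unfolding m_def LC_def by simp
    moreover have "\<forall>k\<in>Poly_Mapping.keys m. ord k t"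
      unfolding m_def u by (auto intro: keys_monom_mult_le)
    ultimately have "\<forall>k\<in>Poly_Mapping.keys (p - m). ord k t \<and> k \<noteq> t"
      using keys_diff[of p m] below by (auto simp: c_def in_keys_iff lookup_minus)
    moreover have "p - m \<in> Phat Z"
      using Phat_diff p m by blast
    ultimately show ?thesis
      using m by (intro exI[of _ "p - m"]) simp
  qed
qed

lemma exists_standard_remainder_below:
  fixes I :: "('x, 'a::field) mpoly set"
  assumes I: "is_ideal I"
  shows "p \<in> Phat Z \<Longrightarrow> \<forall>k\<in>Poly_Mapping.keys p. ord k t \<Longrightarrow>
    \<exists>r. p - r \<in> I \<inter> Phat Z \<and> (\<forall>k\<in>Poly_Mapping.keys r. standard ord (I \<inter> Phat Z) k)"
proof (induction t arbitrary: p rule: wf_induct_rule[OF wf_strict_term_order])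
  case (1 t)
  let ?J = "I \<inter> Phat Z"
  obtain q where q: "q \<in> Phat Z" "\<forall>k\<in>Poly_Mapping.keys q. ord k t \<and> k \<noteq> t"
    and pq: "p - q \<in> ?J \<or> (\<forall>k\<in>Poly_Mapping.keys (p - q). standard ord ?J k)"
    using eliminate_top_term[OF I "1.prems"] by blast
  obtain r where r: "q - r \<in> ?J" "\<forall>k\<in>Poly_Mapping.keys r. standard ord ?J k"
  proof (cases "q = 0")
    case True
    then show thesis
      using that[of 0] ideal_zero[OF I] by (simp add: Phat_iff)
  next
    case False
    then show thesis
      using that "1.IH"[of "LT ord q" q] q LT_greatest by blast
  qed
  from pq show ?case
  proof
    assume "p - q \<in> ?J"
    then have "(p - q) + (q - r) \<in> ?J"
      using ideal_Phat_add[OF I] r(1) by blast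
    then show ?thesis
      using r(2) by (intro exI[of _ r]) simp
  next
    assume "\<forall>k\<in>Poly_Mapping.keys (p - q). standard ord ?J k"
    then have "\<forall>k\<in>Poly_Mapping.keys ((p - q) + r). standard ord ?J k"
      using keys_add[of "p - q" r] r(2) by blast
    then show ?thesis
      using r(1) by (intro exI[of _ "(p - q) + r"]) (simp add: algebra_simps)
  qed
qed

lemma exists_standard_remainder:
  fixes I :: "('x, 'a::field) mpoly set"
  assumes I: "is_ideal I" and p: "p \<in> Phat Z"
  shows "\<exists>r. p - r \<in> I \<inter> Phat Z \<and> (\<forall>t\<in>Poly_Mapping.keys r. standard ord (I \<inter> Phat Z) t)"
proof (cases "p = 0")
  case True
  then show ?thesis
    using ideal_zero[OF I] by (intro exI[of _ 0]) (simp add: Phat_iff)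
next
  case False
  have "\<forall>k\<in>Poly_Mapping.keys p. ord k (LT ord p)"
    using key_le_LT by blast
  then show ?thesis
    using exists_standard_remainder_below[OF I p] by blast
qed

lemma NF_spec:
  fixes I :: "('x, 'a::field) mpoly set"
  assumes "is_ideal I" "p \<in> Phat Z"
  shows "p - NF ord (I \<inter> Phat Z) p \<in> I \<inter> Phat Z"
    and "\<forall>t\<in>Poly_Mapping.keys (NF ord (I \<inter> Phat Z) p). standard ord (I \<inter> Phat Z) t"
proof -
  obtain r where r: "p - r \<in> I \<inter> Phat Z" "\<forall>t\<in>Poly_Mapping.keys r. standard ord (I \<inter> Phat Z) t"
    using exists_standard_remainder[OF assms] by blast
  have "NF ord (I \<inter> Phat Z) p = r"
    unfolding NF_eq_standard
  proof (rule the_equality)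
    fix r' assume "p - r' \<in> I \<inter> Phat Z \<and> (\<forall>t\<in>Poly_Mapping.keys r'. standard ord (I \<inter> Phat Z) t)"
    then show "r' = r"
      using standard_remainder_unique[OF ideal_Phat_diff[OF assms(1)], where h = p and r = r' and r' = r] r
      by blast
  qed (use r in blast)
  then show "p - NF ord (I \<inter> Phat Z) p \<in> I \<inter> Phat Z"
    and "\<forall>t\<in>Poly_Mapping.keys (NF ord (I \<inter> Phat Z) p). standard ord (I \<inter> Phat Z) t"
    using r by simp_all
qed

section \<open>The reduced basis from a Z-separating basis\<close>

lemma var_minus_NF_tail:
  fixes I :: "('x, 'a::field) mpoly set" and s i :: nat and z :: "nat \<Rightarrow> 'x"
    and f :: "nat \<Rightarrow> ('x, 'a) mpoly"
  defines "Z \<equiv> z ` {..<s}"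
  defines "S \<equiv> var (z i) - NF ord (I \<inter> Phat Z) (tail (z i) (f i))"
  assumes I: "is_ideal I" and coh: "coh_Z_separating s z f" and inj: "inj_on z {..<s}"
    and i: "i < s" and LT_f: "LT ord (f i) = Poly_Mapping.single (z i) 1"
    and f_I: "const (1 / LC ord (f i)) * f i \<in> I"
  shows "S \<in> I \<and> LT ord S = Poly_Mapping.single (z i) 1 \<and> LC ord S = 1 \<and>
    (\<forall>t\<in>Poly_Mapping.keys S. t = Poly_Mapping.single (z i) 1 \<or>
       (Poly_Mapping.keys t \<inter> Z = {} \<and> standard ord (I \<inter> Phat Z) t))"
proof -
  define zt where "zt = Poly_Mapping.single (z i) (1::nat)"
  define T where "T = tail (z i) (f i)"
  define h where "h = NF ord (I \<inter> Phat Z) T"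
  have T: "T \<in> Phat Z" "\<forall>t\<in>Poly_Mapping.keys T. ord t zt \<and> t \<noteq> zt"
    using tail_in_Phat[OF coh inj i] keys_tail_below[of "z i" "f i"] coh i LT_f
    unfolding coh_Z_separating_def T_def Z_def zt_def by blast+
  have h: "T - h \<in> I \<inter> Phat Z" "\<forall>t\<in>Poly_Mapping.keys h. standard ord (I \<inter> Phat Z) t"
    using NF_spec[OF I T(1)] unfolding h_def by blast+
  have h_below: "\<forall>t\<in>Poly_Mapping.keys h. ord t zt \<and> t \<noteq> zt"
    using standard_remainder_below[OF h T(2)] .
  have "T - (T - h) \<in> Phat Z"
    using Phat_diff T(1) h(1) by blast
  then have h_Phat: "h \<in> Phat Z"
    by simp
  have S_eq: "S = var (z i) - h"
    unfolding S_def h_def T_def ..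
  have S_zt: "Poly_Mapping.lookup S zt = 1"
    using h_below by (auto simp: S_eq zt_def lookup_minus lookup_var in_keys_iff)
  have keys_S: "Poly_Mapping.keys S \<subseteq> insert zt (Poly_Mapping.keys h)"
    by (auto simp: S_eq zt_def in_keys_iff lookup_minus lookup_var split: if_splits)
  have LT_S: "LT ord S = zt"
    using S_zt keys_S h_below term_order_refl by (intro LT_eqI) (auto simp: in_keys_iff)
  have "var (z i) - T = const (1 / LC ord (f i)) * f i"
    unfolding T_def tail_def LC_def LT_f by simp
  then have "S = const (1 / LC ord (f i)) * f i + (T - h)"
    unfolding S_eq by (simp add: algebra_simps)
  then have "S \<in> I"
    using ideal_add[OF I f_I] h(1) by simp
  moreover have "\<forall>t\<in>Poly_Mapping.keys S. t = zt \<or> (Poly_Mapping.keys t \<inter> Z = {} \<and> standard ord (I \<inter> Phat Z) t)"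
    using keys_S h(2) h_Phat unfolding Phat_iff by blast
  ultimately show ?thesis
    using LT_S S_zt unfolding LC_def zt_def by simp
qed

lemma reduced_GB_from_Z_sep_GB_data:
  fixes I :: "('x, 'a::field) mpoly set"
  assumes I: "is_ideal I" and IM: "I \<subseteq> Mideal" and inj: "inj_on z {..<s}"
    and D: "Z_sep_GB_data ord I s z f Gh"
  shows "is_reduced_GB ord I
    ((\<lambda>i. var (z i) - NF ord (I \<inter> Phat (z ` {..<s})) (tail (z i) (f i))) ` {..<s} \<union> Gh)"
proof -
  have GB: "is_GB ord I ((\<lambda>i. const (1 / LC ord (f i)) * f i) ` {..<s} \<union> Gh)"
    and coh: "coh_Z_separating s z f"
    and LT_f: "\<forall>i<s. LT ord (f i) = Poly_Mapping.single (z i) 1"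
    and Gh: "is_reduced_GB ord (I \<inter> Phat (z ` {..<s})) Gh"
    using D unfolding Z_sep_GB_data_def by blast+
  have LT_F: "\<forall>i<s. LT ord (const (1 / LC ord (f i)) * f i) = Poly_Mapping.single (z i) 1"
  proof (intro allI impI)
    fix i assume i: "i < s"
    then have "f i \<noteq> 0"
      using coh unfolding coh_Z_separating_def by blast
    then have "1 / LC ord (f i) \<noteq> 0"
      using LC_neq_zero by simp
    then show "LT ord (const (1 / LC ord (f i)) * f i) = Poly_Mapping.single (z i) 1"
      unfolding LT_const_mult[OF \<open>1 / LC ord (f i) \<noteq> 0\<close>] using LT_f i by simp
  qed
  define S where "S i = var (z i) - NF ord (I \<inter> Phat (z ` {..<s})) (tail (z i) (f i))" for i
  have S: "S i \<in> I \<and> LT ord (S i) = Poly_Mapping.single (z i) 1 \<and> LC ord (S i) = 1 \<and>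
      (\<forall>t\<in>Poly_Mapping.keys (S i). t = Poly_Mapping.single (z i) 1 \<or>
        (Poly_Mapping.keys t \<inter> z ` {..<s} = {} \<and> standard ord (I \<inter> Phat (z ` {..<s})) t))"
    if i: "i < s" for i
  proof -
    have "const (1 / LC ord (f i)) * f i \<in> I"
      using GB i unfolding is_GB_def by blast
    then show ?thesis
      unfolding S_def using var_minus_NF_tail[OF I coh inj i] LT_f i by blast
  qed
  have "is_reduced_GB ord I (S ` {..<s} \<union> Gh)"
    by (rule reduced_GB_of_separated_parts[OF IM inj GB LT_F Gh]) (use S in blast)+
  then show ?thesis
    unfolding S_def .
qed

end

theorem proposition2p12:
  fixes I :: "('x::finite, 'a::field) mpoly set"
    and ord :: "'x mon \<Rightarrow> 'x mon \<Rightarrow> bool"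
    and s :: nat and z :: "nat \<Rightarrow> 'x"
  assumes "is_ideal I" and "I \<subseteq> Mideal"
    and "s \<ge> 1" and "inj_on z {..<s}"
    and "Z_separating_order ord I s z"
  shows "(\<forall>G. is_reduced_GB ord I G \<longrightarrow> is_Z_sep_GB ord I s z G) \<and>
         (\<forall>f Gh. Z_sep_GB_data ord I s z f Gh \<longrightarrow>
           (let h = (\<lambda>i. NF ord (I \<inter> Phat (z ` {..<s})) (tail (z i) (f i)));
                S = (\<lambda>i. var (z i) - h i) ` {..<s} \<union> Gh
            in is_reduced_GB ord I S \<and> (\<forall>G. is_reduced_GB ord I G \<longrightarrow> G = S)))"
proof -
  obtain F where F: "\<forall>i<s. F i \<in> I \<and> F i \<noteq> 0 \<and> LT ord (F i) = Poly_Mapping.single (z i) 1"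
    and "term_order ord"
    using assms(5) unfolding Z_separating_order_def by blast
  then interpret finite_term_ordering ord
    by unfold_locales
  have "is_reduced_GB ord I G \<Longrightarrow> is_Z_sep_GB ord I s z G" for G
    using reduced_GB_is_Z_sep_GB[OF assms(2,4) F] .
  moreover have "is_reduced_GB ord I G \<Longrightarrow> G = S" if "is_reduced_GB ord I S" for G S
    using reduced_GB_unique[OF ideal_diff[OF assms(1)]] that by blast
  ultimately show ?thesis
    using reduced_GB_from_Z_sep_GB_data[OF assms(1,2,4)] unfolding Let_def by blast
qed

end
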